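(* Let $A,B\in\mathcal{M}_d(\mathbb{C})$ with $\operatorname{diag}(A)=\operatorname{diag}(B)$, such that $A$ is entrywise nonnegative, $B$ is positive semidefinite, and $A_{ij}A_{ji}\ge|B_{ij}|^2$ for all $i,j$. If moreover $B$ is diagonally dominant, then $(A,B)\in\mathsf{PCP}_d^2$.
   Context: $B$ is diagonally dominant if $|B_{ii}|\ge\sum_{j\ne i}|B_{ij}|$ and $|B_{ii}|\ge\sum_{j\ne i}|B_{ji}|$ for all $i$. For $v\in\mathbb{C}^d$, $\sigma(v)$ is the number of nonzero coordinates; $\odot$ is the entrywise product, $\bar v$ the entrywise conjugate. $(A,B)\in\mathsf{PCP}_d^2$ means there are finitely many vectors $v_n,w_n\in\mathbb{C}^d$ with $\sigma(v_n\odot w_n)\le2$ for all $n$, $A=\sum_n|v_n\odot\bar v_n\rangle\langle w_n\odot\bar w_n|$ and $B=\sum_n|v_n\odot w_n\rangle\langle v_n\odot w_n|$. *)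

theory Defs
  imports "HOL-Analysis.Analysis"
begin

definition nonneg_entrywise :: "complex^'d^'d \<Rightarrow> bool" where
  "nonneg_entrywise A \<longleftrightarrow> (\<forall>i j. A$i$j \<in> \<real> \<and> Re (A$i$j) \<ge> 0)"

definition psd :: "complex^'d^'d::finite \<Rightarrow> bool" where
  "psd B \<longleftrightarrow> (\<forall>x::complex^'d. let q = (\<Sum>i\<in>UNIV. \<Sum>j\<in>UNIV. cnj (x$i) * B$i$j * x$j)
                                  in q \<in> \<real> \<and> Re q \<ge> 0)"

definition diag_dominant :: "complex^'d^'d::finite \<Rightarrow> bool" where
  "diag_dominant B \<longleftrightarrow> (\<forall>i. cmod (B$i$i) \<ge> (\<Sum>j\<in>UNIV-{i}. cmod (B$i$j))
                           \<and> cmod (B$i$i) \<ge> (\<Sum>j\<in>UNIV-{i}. cmod (B$j$i)))"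

definition sigma :: "complex^'d::finite \<Rightarrow> nat" where
  "sigma v = card {i. v$i \<noteq> 0}"

definition hadamard :: "complex^'d \<Rightarrow> complex^'d \<Rightarrow> complex^'d" where
  "hadamard v w = (\<chi> i. v$i * w$i)"

definition vconj :: "complex^'d \<Rightarrow> complex^'d" where
  "vconj v = (\<chi> i. cnj (v$i))"

definition outer :: "complex^'d \<Rightarrow> complex^'d \<Rightarrow> complex^'d^'d" where
  "outer x y = (\<chi> i j. x$i * cnj (y$j))"

definition PCP2 :: "complex^'d^'d::finite \<Rightarrow> complex^'d^'d \<Rightarrow> bool" where
  "PCP2 A B \<longleftrightarrow> (\<exists>vws :: ((complex^'d) \<times> (complex^'d)) list.
      (\<forall>(v,w)\<in>set vws. sigma (hadamard v w) \<le> 2) \<and>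
      A = sum_list (map (\<lambda>(v,w). outer (hadamard v (vconj v)) (hadamard w (vconj w))) vws) \<and>
      B = sum_list (map (\<lambda>(v,w). outer (hadamard v w) (hadamard v w)) vws))"

end

theory Submission
  imports Defs
begin

(* For i \<noteq> j, write \<gamma> = B_ij. The pair of 2 x 2 blocks [[|\<gamma>|, a], [b, |\<gamma>|]] and
   [[|\<gamma>|, \<gamma>], [cnj \<gamma>, |\<gamma>|]] on the coordinates i, j lies in PCP as soon as a, b \<ge> 0 and
   a b \<ge> |\<gamma>|^2: one generator supported on {i, j} produces it with b replaced by |\<gamma>|^2 / a,
   and the missing nonnegative entry b - |\<gamma>|^2 / a is a generator with v \<odot> w = 0.
   Summing these blocks, scaled by 1/2, over all ordered pairs (i, j) reproduces the off-diagonal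
   parts of A and B (B is Hermitian, being psd) and uses up \<Sum>_{j \<noteq> i} |B_ij| of the i-th
   diagonal entry. By diagonal dominance what remains is a nonnegative diagonal matrix, and
   such matrices are trivially in PCP. *)

definition hermitian :: "complex^'d^'d \<Rightarrow> bool" where
  "hermitian B \<longleftrightarrow> (\<forall>i j. B$j$i = cnj (B$i$j))"

lemma axis_component: "axis i x $ k = (if k = i then x else 0)"
  by (simp add: axis_def)

lemma axis_zero [simp]: "axis i 0 = 0"
  by (simp add: axis_def vec_eq_iff)

lemma quadratic_form_axis_add_axis:
  fixes B :: "complex^'d^'d::finite" and i j :: 'd and a b :: complex
  defines "x \<equiv> axis i a + axis j b"
  shows "(\<Sum>k\<in>UNIV. \<Sum>l\<in>UNIV. cnj (x$k) * B$k$l * x$l)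
    = cnj a * B$i$i * a + cnj a * B$i$j * b + cnj b * B$j$i * a + cnj b * B$j$j * b"
proof -
  have "cnj (x$k) * B$k$l * x$l =
      (if l = i then if k = i then cnj a * B$k$l * a else 0 else 0)
    + (if l = j then if k = i then cnj a * B$k$l * b else 0 else 0)
    + (if l = i then if k = j then cnj b * B$k$l * a else 0 else 0)
    + (if l = j then if k = j then cnj b * B$k$l * b else 0 else 0)" for k l
    by (simp add: x_def axis_component ring_distribs)
  then show ?thesis
    by (simp add: sum.distrib)
qed

lemma psd_imp_hermitian:
  fixes B :: "complex^'d^'d::finite"
  assumes "psd B"
  shows "hermitian B"
  unfolding hermitian_def
proof (intro allI)
  fix i j
  have real: "cnj a * B$i$i * a + cnj a * B$i$j * b + cnj b * B$j$i * a + cnj b * B$j$j * b \<in> \<real>"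
    for a b
    using assms unfolding psd_def Let_def quadratic_form_axis_add_axis[symmetric] by blast
  have "B$i$i \<in> \<real>" "B$j$j \<in> \<real>"
    using real[of 1 0] real[of 0 1] by simp_all
  moreover have "B$i$i + B$i$j + B$j$i + B$j$j \<in> \<real>"
    using real[of 1 1] by simp
  moreover have "B$i$i + \<i> * B$i$j - \<i> * B$j$i + B$j$j \<in> \<real>"
    using real[of 1 \<i>] by (simp add: algebra_simps)
  ultimately show "B$j$i = cnj (B$i$j)"
    by (simp add: complex_is_Real_iff complex_eq_iff)
qed

lemma PCP2_zero: "PCP2 0 0"
  unfolding PCP2_def by (rule exI[of _ "[]"]) simp

lemma PCP2_add:
  assumes "PCP2 A B" "PCP2 A' B'"
  shows "PCP2 (A + A') (B + B')"
proof -
  obtain xs where "\<forall>(v,w)\<in>set xs. sigma (hadamard v w) \<le> 2"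
    "A = sum_list (map (\<lambda>(v,w). outer (hadamard v (vconj v)) (hadamard w (vconj w))) xs)"
    "B = sum_list (map (\<lambda>(v,w). outer (hadamard v w) (hadamard v w)) xs)"
    using assms(1) unfolding PCP2_def by blast
  moreover obtain ys where "\<forall>(v,w)\<in>set ys. sigma (hadamard v w) \<le> 2"
    "A' = sum_list (map (\<lambda>(v,w). outer (hadamard v (vconj v)) (hadamard w (vconj w))) ys)"
    "B' = sum_list (map (\<lambda>(v,w). outer (hadamard v w) (hadamard v w)) ys)"
    using assms(2) unfolding PCP2_def by blast
  ultimately show ?thesis
    unfolding PCP2_def by (intro exI[of _ "xs @ ys"]) auto
qed

lemma PCP2_sum:
  assumes "finite S" "\<And>x. x \<in> S \<Longrightarrow> PCP2 (f x) (g x)"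
  shows "PCP2 (sum f S) (sum g S)"
  using assms by (induction S rule: finite_induct) (auto intro: PCP2_add PCP2_zero)

lemma PCP2_generator:
  assumes "sigma (hadamard v w) \<le> 2"
  shows "PCP2 (outer (hadamard v (vconj v)) (hadamard w (vconj w))) (outer (hadamard v w) (hadamard v w))"
  unfolding PCP2_def by (rule exI[of _ "[(v,w)]"]) (use assms in auto)

lemma sigma_axis_add_axis: "sigma (axis i x + axis j y) \<le> 2"
proof -
  have "{k. (axis i x + axis j y) $ k \<noteq> 0} \<subseteq> {i, j}"
    by (auto simp: axis_component)
  then have "sigma (axis i x + axis j y) \<le> card {i, j}"
    unfolding sigma_def by (intro card_mono) auto
  also have "\<dots> \<le> 2"
    by (simp add: card_insert_if)
  finally show ?thesis .
qed

text \<open>Matrices are written as sums of matrix units: \<open>axis i (axis j c)\<close> has the single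
  nonzero entry \<open>c\<close> at position \<open>(i, j)\<close>.\<close>

lemma PCP2_two_coordinates:
  fixes i j :: "'d::finite"
  assumes "i \<noteq> j"
  shows "PCP2
    (axis i (axis i (of_real ((cmod (a * b))\<^sup>2))) + axis i (axis j (of_real ((cmod (a * b'))\<^sup>2)))
      + axis j (axis i (of_real ((cmod (a' * b))\<^sup>2))) + axis j (axis j (of_real ((cmod (a' * b'))\<^sup>2))))
    (axis i (axis i (of_real ((cmod (a * b))\<^sup>2))) + axis i (axis j (a * b * cnj (a' * b')))
      + axis j (axis i (a' * b' * cnj (a * b))) + axis j (axis j (of_real ((cmod (a' * b'))\<^sup>2))))"
proof -
  define v :: "complex^'d" where "v = axis i a + axis j a'"
  define w :: "complex^'d" where "w = axis i b + axis j b'"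
  have vw: "hadamard v w = axis i (a * b) + axis j (a' * b')"
    using assms by (auto simp: vec_eq_iff v_def w_def hadamard_def axis_component)
  have "PCP2 (outer (hadamard v (vconj v)) (hadamard w (vconj w))) (outer (hadamard v w) (hadamard v w))"
    by (rule PCP2_generator) (simp add: vw sigma_axis_add_axis)
  moreover have "outer (hadamard v (vconj v)) (hadamard w (vconj w)) =
    axis i (axis i (of_real ((cmod (a * b))\<^sup>2))) + axis i (axis j (of_real ((cmod (a * b'))\<^sup>2)))
      + axis j (axis i (of_real ((cmod (a' * b))\<^sup>2))) + axis j (axis j (of_real ((cmod (a' * b'))\<^sup>2)))"
    using assms by (auto simp: vec_eq_iff v_def w_def outer_def hadamard_def vconj_def axis_component
        complex_norm_square mult_ac simp flip: of_real_power)
  moreover have "outer (hadamard v w) (hadamard v w) =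
    axis i (axis i (of_real ((cmod (a * b))\<^sup>2))) + axis i (axis j (a * b * cnj (a' * b')))
      + axis j (axis i (a' * b' * cnj (a * b))) + axis j (axis j (of_real ((cmod (a' * b'))\<^sup>2)))"
    using assms by (auto simp: vec_eq_iff vw outer_def axis_component
        complex_norm_square mult_ac simp flip: of_real_power)
  ultimately show ?thesis
    by simp
qed

lemma PCP2_off_diagonal_entry:
  fixes i j :: "'d::finite"
  assumes "i \<noteq> j" "c \<ge> 0"
  shows "PCP2 (axis i (axis j (of_real c))) 0"
  using PCP2_two_coordinates[OF assms(1), where a = "of_real (sqrt c)" and b = 0 and a' = 0 and b' = 1]
    assms(2)
  by simp

lemma PCP2_diagonal_entry:
  fixes i :: "'d::finite"
  assumes "r \<ge> 0"
  shows "PCP2 (axis i (axis i (of_real r))) (axis i (axis i (of_real r)))"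
proof -
  define v :: "complex^'d" where "v = axis i (of_real (sqrt r))"
  define w :: "complex^'d" where "w = axis i 1"
  have vw: "hadamard v w = axis i (of_real (sqrt r)) + axis i 0"
    by (auto simp: vec_eq_iff v_def w_def hadamard_def axis_component)
  have "PCP2 (outer (hadamard v (vconj v)) (hadamard w (vconj w))) (outer (hadamard v w) (hadamard v w))"
    by (rule PCP2_generator) (simp only: vw sigma_axis_add_axis)
  moreover have "outer (hadamard v (vconj v)) (hadamard w (vconj w)) = axis i (axis i (of_real r))"
    and "outer (hadamard v w) (hadamard v w) = axis i (axis i (of_real r))"
    using assms by (auto simp: vec_eq_iff v_def w_def outer_def hadamard_def vconj_def axis_component
        simp flip: of_real_mult)
  ultimately show ?thesis
    by simp
qed

lemma PCP2_nonneg_diagonal: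
  fixes r :: "'d::finite \<Rightarrow> real"
  assumes "\<And>i. r i \<ge> 0"
  shows "PCP2 (\<chi> k l. if k = l then of_real (r k) else 0) (\<chi> k l. if k = l then of_real (r k) else 0)"
proof -
  have "(\<chi> k l. if k = l then of_real (r k) else 0)
      = (\<Sum>i\<in>UNIV. axis i (axis i (of_real (r i))) :: complex^'d^'d)"
    by (simp add: vec_eq_iff axis_component)
  moreover have
    "PCP2 (\<Sum>i\<in>UNIV. axis i (axis i (of_real (r i)))) (\<Sum>i\<in>UNIV. axis i (axis i (of_real (r i))))"
    by (intro PCP2_sum PCP2_diagonal_entry assms) simp
  ultimately show ?thesis
    by simp
qed

definition block2 :: "'d::finite \<Rightarrow> 'd \<Rightarrow> real \<Rightarrow> complex \<Rightarrow> complex \<Rightarrow> complex^'d^'d" where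
  "block2 i j d x y =
    axis i (axis i (of_real d)) + axis j (axis j (of_real d)) + axis i (axis j x) + axis j (axis i y)"

lemma PCP2_block2_tight:
  fixes i j :: "'d::finite" and \<gamma> :: complex
  assumes ij: "i \<noteq> j" and "\<alpha> > 0"
  shows "PCP2 (block2 i j (cmod \<gamma>) (of_real \<alpha>) (of_real ((cmod \<gamma>)\<^sup>2 / \<alpha>)))
              (block2 i j (cmod \<gamma>) \<gamma> (cnj \<gamma>))"
proof -
  define p where "p = sqrt (cmod \<gamma>)"
  define s where "s = sqrt \<alpha>"
  define a' where "a' = cnj \<gamma> / of_real (p * s)"
  have "s > 0" "p\<^sup>2 = cmod \<gamma>" "s\<^sup>2 = \<alpha>"
    using \<open>\<alpha> > 0\<close> by (simp_all add: p_def s_def)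
  have "(cmod (a' * of_real p))\<^sup>2 = (cmod \<gamma>)\<^sup>2 / \<alpha>" "(cmod (a' * of_real s))\<^sup>2 = cmod \<gamma>"
    using \<open>s > 0\<close> \<open>p\<^sup>2 = cmod \<gamma>\<close> \<open>s\<^sup>2 = \<alpha>\<close>
    by (auto simp: a'_def norm_mult norm_divide power2_eq_square p_def)
  moreover have "of_real p * cnj (a' * of_real s) = \<gamma>" "a' * of_real s * cnj (of_real p) = cnj \<gamma>"
    using \<open>s > 0\<close> \<open>p\<^sup>2 = cmod \<gamma>\<close> by (auto simp: a'_def p_def)
  moreover note PCP2_two_coordinates[OF ij, where a = 1 and b = "of_real p" and a' = a' and b' = "of_real s"]
  ultimately show ?thesis
    using \<open>p\<^sup>2 = cmod \<gamma>\<close> \<open>s\<^sup>2 = \<alpha>\<close> by (simp add: block2_def add_ac)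
qed

lemma PCP2_block2:
  fixes i j :: "'d::finite" and \<gamma> :: complex
  assumes ij: "i \<noteq> j" and "\<alpha> \<ge> 0" "\<beta> \<ge> 0" and \<gamma>_le: "(cmod \<gamma>)\<^sup>2 \<le> \<alpha> * \<beta>"
  shows "PCP2 (block2 i j (cmod \<gamma>) (of_real \<alpha>) (of_real \<beta>)) (block2 i j (cmod \<gamma>) \<gamma> (cnj \<gamma>))"
proof (cases "\<gamma> = 0")
  case True
  then show ?thesis
    using PCP2_add[OF PCP2_off_diagonal_entry[OF ij \<open>\<alpha> \<ge> 0\<close>]
        PCP2_off_diagonal_entry[OF ij[symmetric] \<open>\<beta> \<ge> 0\<close>]]
    by (simp add: block2_def)
next
  case False
  then have "\<alpha> > 0"
    using \<gamma>_le \<open>\<alpha> \<ge> 0\<close> by (metis less_eq_real_def mult_zero_left not_less zero_less_norm_iff zero_less_power)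
  then have "(cmod \<gamma>)\<^sup>2 / \<alpha> \<le> \<beta>"
    using \<gamma>_le by (simp add: field_simps mult.commute)
  then have "PCP2 (axis j (axis i (of_real (\<beta> - (cmod \<gamma>)\<^sup>2 / \<alpha>)))) 0"
    by (intro PCP2_off_diagonal_entry) (use ij in auto)
  from PCP2_add[OF PCP2_block2_tight[OF ij \<open>\<alpha> > 0\<close>, of \<gamma>] this]
  show ?thesis
    by (rule rev_iffD1[OF _ arg_cong2[where f = PCP2]])
      (auto simp: block2_def vec_eq_iff axis_component)
qed

lemma sum_offdiag_block2:
  fixes M :: "complex^'d^'d::finite" and c :: "'d \<Rightarrow> 'd \<Rightarrow> real"
  shows "(\<Sum>i\<in>UNIV. \<Sum>j\<in>UNIV-{i}. block2 i j (c i j / 2) (M$i$j / 2) (M$j$i / 2))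
    = (\<chi> k l. if k = l then of_real (\<Sum>j\<in>UNIV-{k}. (c k j + c j k) / 2) else M$k$l)"
proof -
  have pull_if: "(\<Sum>j\<in>S. if P then f j else 0) = (if P then sum f S else 0)"
    for P S and f :: "'d \<Rightarrow> 'b::comm_monoid_add"
    by simp
  have "(\<Sum>i\<in>UNIV. \<Sum>j\<in>UNIV-{i}. block2 i j (c i j / 2) (M$i$j / 2) (M$j$i / 2)) $ k $ l
    = (if k = l then (\<Sum>j\<in>UNIV-{k}. of_real (c k j / 2) + of_real (c j k / 2)) else M$k$l / 2 + M$k$l / 2)"
    for k l
    by (simp add: block2_def axis_component sum.distrib if_distrib[of "\<lambda>v. v $ l"] pull_if sum.If_cases
        cong: if_cong)
      (simp add: Collect_neg_eq Compl_eq_Diff_UNIV)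
  then show ?thesis
    by (simp add: vec_eq_iff add_divide_distrib)
qed

lemma PCP2_off_diagonal_part:
  fixes A B :: "complex^'d^'d::finite"
  assumes "nonneg_entrywise A" "hermitian B"
    and "\<And>i j. (cmod (B$i$j))\<^sup>2 \<le> Re (A$i$j) * Re (A$j$i)"
  defines "\<rho> i \<equiv> \<Sum>j\<in>UNIV-{i}. cmod (B$i$j)"
  shows "PCP2 (\<chi> k l. if k = l then of_real (\<rho> k) else A$k$l)
              (\<chi> k l. if k = l then of_real (\<rho> k) else B$k$l)"
proof -
  define g where "g i j = cmod (B$i$j)" for i j
  have A_entry: "A$i$j = of_real (Re (A$i$j))" "Re (A$i$j) \<ge> 0" for i j
    using assms(1) unfolding nonneg_entrywise_def by (auto simp: complex_is_Real_iff complex_eq_iff)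
  have B_sym: "B$j$i = cnj (B$i$j)" for i j
    using assms(2) unfolding hermitian_def by blast
  have "PCP2 (block2 i j (g i j / 2) (A$i$j / 2) (A$j$i / 2)) (block2 i j (g i j / 2) (B$i$j / 2) (B$j$i / 2))"
    if "i \<noteq> j" for i j
    using PCP2_block2[OF that, of "Re (A$i$j) / 2" "Re (A$j$i) / 2" "B$i$j / 2"] A_entry assms(3)[of i j]
    by (simp add: g_def B_sym[of i j] norm_divide power_divide flip: A_entry(1))
  then have "PCP2 (\<Sum>i\<in>UNIV. \<Sum>j\<in>UNIV-{i}. block2 i j (g i j / 2) (A$i$j / 2) (A$j$i / 2))
    (\<Sum>i\<in>UNIV. \<Sum>j\<in>UNIV-{i}. block2 i j (g i j / 2) (B$i$j / 2) (B$j$i / 2))"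
    by (intro PCP2_sum) auto
  moreover have "(\<Sum>j\<in>UNIV-{k}. (g k j + g j k) / 2) = \<rho> k" for k
    unfolding \<rho>_def g_def by (simp add: B_sym[of k] flip: sum_divide_distrib)
  ultimately show ?thesis
    unfolding sum_offdiag_block2 by (simp only:)
qed

theorem lemma3p8:
  fixes A B :: "complex^'d^'d::finite"
  assumes "\<forall>i. A$i$i = B$i$i"
    and "nonneg_entrywise A"
    and "psd B"
    and "\<forall>i j. Re (A$i$j) * Re (A$j$i) \<ge> (cmod (B$i$j))\<^sup>2"
    and "diag_dominant B"
  shows "PCP2 A B"
proof -
  define \<rho> where "\<rho> i = (\<Sum>j\<in>UNIV-{i}. cmod (B$i$j))" for i
  define r where "r i = Re (A$i$i) - \<rho> i" for i
  have A_diag: "A$i$i = of_real (Re (A$i$i))" "Re (A$i$i) \<ge> 0" for i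
    using assms(2) unfolding nonneg_entrywise_def by (auto simp: complex_is_Real_iff complex_eq_iff)
  have "r i \<ge> 0" for i
    using assms(1,5) A_diag[of i] unfolding diag_dominant_def r_def \<rho>_def
    by (metis abs_of_nonneg diff_ge_0_iff_ge norm_of_real)
  have "PCP2 (\<chi> k l. if k = l then of_real (\<rho> k) else A$k$l) (\<chi> k l. if k = l then of_real (\<rho> k) else B$k$l)"
    using PCP2_off_diagonal_part[OF assms(2) psd_imp_hermitian[OF assms(3)]] assms(4)
    unfolding \<rho>_def by simp
  from PCP2_add[OF this PCP2_nonneg_diagonal[OF \<open>\<And>i. r i \<ge> 0\<close>]]
  show ?thesis
  proof (rule rev_iffD1[OF _ arg_cong2[where f = PCP2]])
    have "of_real (\<rho> k) + of_real (r k) = A$k$k" for k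
      by (simp add: r_def A_diag(1)[symmetric])
    then show "(\<chi> k l. if k = l then of_real (\<rho> k) else A$k$l) + (\<chi> k l. if k = l then of_real (r k) else 0) = A"
      and "(\<chi> k l. if k = l then of_real (\<rho> k) else B$k$l) + (\<chi> k l. if k = l then of_real (r k) else 0) = B"
      using assms(1) by (auto simp: vec_eq_iff)
  qed
qed

end
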